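(* Let $G=(V,E)$ be a finite graph of maximum degree $\Delta$, and for $u\in V$ let $d_u$ denote the degree of $u$. Let $\boldsymbol\lambda\in[0,\infty)^{V}$ satisfy $\lambda_u<1/\Delta$ for all $u\in V$. Then \[ \mathbb{E}_{G,\boldsymbol\lambda}|I| \;\ge\; \sum_{u\in V}\frac{\lambda_u}{1+(d_u+1)\lambda_u}. \]
   Context: For a graph $G=(V,E)$, $\mathcal I(G)$ denotes the set of independent sets of $G$ (including $\emptyset$). For a fugacity vector $\boldsymbol\lambda\in[0,\infty)^V$, the hard-core model is the probability measure on $\mathcal I(G)$ given by $\Pr_{G,\boldsymbol\lambda}(I)=\frac{1}{Z_G(\boldsymbol\lambda)}\prod_{v\in I}\lambda_v$, where $Z_G(\boldsymbol\lambda)=\sum_{J\in\mathcal I(G)}\prod_{v\in J}\lambda_v$. $\mathbb{E}_{G,\boldsymbol\lambda}$ denotes expectation with respect to this measure, and $I$ denotes the random independent set. *)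

theory Defs
  imports "HOL-Analysis.Analysis"
begin

definition simple_graph :: "'a set \<Rightarrow> ('a \<Rightarrow> 'a \<Rightarrow> bool) \<Rightarrow> bool" where
  "simple_graph V E \<longleftrightarrow> finite V \<and> (\<forall>u v. E u v \<longrightarrow> u \<in> V \<and> v \<in> V)
     \<and> (\<forall>u v. E u v \<longrightarrow> E v u) \<and> (\<forall>u. \<not> E u u)"

definition degree :: "'a set \<Rightarrow> ('a \<Rightarrow> 'a \<Rightarrow> bool) \<Rightarrow> 'a \<Rightarrow> nat" where
  "degree V E u = card {v \<in> V. E u v}"

definition max_degree :: "'a set \<Rightarrow> ('a \<Rightarrow> 'a \<Rightarrow> bool) \<Rightarrow> nat" where
  "max_degree V E = (if V = {} then 0 else Max (degree V E ` V))"

definition independent_sets :: "'a set \<Rightarrow> ('a \<Rightarrow> 'a \<Rightarrow> bool) \<Rightarrow> 'a set set" where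
  "independent_sets V E = {I. I \<subseteq> V \<and> (\<forall>u\<in>I. \<forall>v\<in>I. \<not> E u v)}"

definition weight :: "('a \<Rightarrow> real) \<Rightarrow> 'a set \<Rightarrow> real" where
  "weight lam I = (\<Prod>v\<in>I. lam v)"

definition partition_fn :: "'a set \<Rightarrow> ('a \<Rightarrow> 'a \<Rightarrow> bool) \<Rightarrow> ('a \<Rightarrow> real) \<Rightarrow> real" where
  "partition_fn V E lam = (\<Sum>J\<in>independent_sets V E. weight lam J)"

definition hardcore_prob :: "'a set \<Rightarrow> ('a \<Rightarrow> 'a \<Rightarrow> bool) \<Rightarrow> ('a \<Rightarrow> real) \<Rightarrow> 'a set \<Rightarrow> real" where
  "hardcore_prob V E lam I = weight lam I / partition_fn V E lam"

definition expected_size :: "'a set \<Rightarrow> ('a \<Rightarrow> 'a \<Rightarrow> bool) \<Rightarrow> ('a \<Rightarrow> real) \<Rightarrow> real" where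
  "expected_size V E lam = (\<Sum>I\<in>independent_sets V E. real (card I) * hardcore_prob V E lam I)"

end

(*
  Write p v for the probability that v lies in the random independent set I and
  mu v = lam v / (1 + lam v).  Adding v to an independent set avoiding the closed
  neighbourhood of v shows p v = lam v * Pr(I avoids N[v]), and a union bound over N[v]
  gives the covering constraints  p v + mu v * (sum of p over the neighbours of v) >= mu v.
  So E|I| = sum of p v is at least the value of this covering LP, which is bounded by weak
  duality: since every neighbourhood has mu-mass at most D/(D+1) < 1 (D the maximum
  degree), the map
  gamma |-> 1 - (sum of mu u * gamma u over the neighbours) is a contraction, and its fixed
  point gamma >= 0 is a feasible dual solution.  A sum-of-squares argument shows that its
  value sum mu v * gamma v is at least sum mu v / (1 + d v * mu v), which equals the claimed
  bound sum lam v / (1 + (d v + 1) * lam v).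
*)

theory Submission
  imports Defs
begin

definition neighbours :: "'a set \<Rightarrow> ('a \<Rightarrow> 'a \<Rightarrow> bool) \<Rightarrow> 'a \<Rightarrow> 'a set" where
  "neighbours V E v = {u \<in> V. E v u}"

lemma in_neighbours_iff [simp]: "u \<in> neighbours V E v \<longleftrightarrow> u \<in> V \<and> E v u"
  by (simp add: neighbours_def)

lemma finite_neighbours: "finite V \<Longrightarrow> finite (neighbours V E v)"
  by (simp add: neighbours_def)

lemma degree_eq_card_neighbours: "degree V E v = card (neighbours V E v)"
  by (simp add: degree_def neighbours_def)

lemma sum_neighbours_swap:
  assumes "finite V" and "symp E"
  shows "(\<Sum>v\<in>V. \<Sum>u\<in>neighbours V E v. f u v) = (\<Sum>u\<in>V. \<Sum>v\<in>neighbours V E u. f u v)"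
proof -
  have "(\<Sum>v\<in>V. \<Sum>u\<in>neighbours V E v. f u v) = (\<Sum>u\<in>V. \<Sum>v\<in>{v \<in> V. E v u}. f u v)"
    unfolding neighbours_def by (rule sum.swap_restrict[OF assms(1,1)])
  moreover have "{v \<in> V. E v u} = neighbours V E u" for u
    using \<open>symp E\<close> by (auto simp: neighbours_def dest: sympD)
  ultimately show ?thesis by simp
qed

lemma sum_neighbours_nonneg_symmetric:
  assumes "finite V" and "symp E"
    and "\<And>u v. u \<in> V \<Longrightarrow> v \<in> V \<Longrightarrow> 0 \<le> f u v + f v u"
  shows "0 \<le> (\<Sum>v\<in>V. \<Sum>u\<in>neighbours V E v. f u v :: real)"
proof -
  have "0 \<le> (\<Sum>v\<in>V. \<Sum>u\<in>neighbours V E v. f u v + f v u)"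
    by (intro sum_nonneg assms(3)) (auto simp: neighbours_def)
  also have "\<dots> = 2 * (\<Sum>v\<in>V. \<Sum>u\<in>neighbours V E v. f u v)"
    using sum_neighbours_swap[OF assms(1,2), of "\<lambda>u v. f v u"] by (simp add: sum.distrib)
  finally show ?thesis by simp
qed

section \<open>A covering linear program and its dual\<close>

definition dual_step :: "'a set \<Rightarrow> ('a \<Rightarrow> 'a \<Rightarrow> bool) \<Rightarrow> ('a \<Rightarrow> real) \<Rightarrow> ('a \<Rightarrow> real) \<Rightarrow> 'a \<Rightarrow> real" where
  "dual_step V E mu g v = 1 - (\<Sum>u\<in>neighbours V E v. mu u * g u)"

lemma dual_step_unit_interval:
  assumes "\<And>u. u \<in> V \<Longrightarrow> 0 \<le> mu u" and "(\<Sum>u\<in>neighbours V E v. mu u) \<le> 1"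
    and "\<And>u. u \<in> V \<Longrightarrow> 0 \<le> g u \<and> g u \<le> 1"
  shows "0 \<le> dual_step V E mu g v \<and> dual_step V E mu g v \<le> 1"
proof -
  have "(\<Sum>u\<in>neighbours V E v. mu u * g u) \<le> (\<Sum>u\<in>neighbours V E v. mu u)"
    using assms(1,3) by (intro sum_mono mult_left_le) auto
  moreover have "0 \<le> (\<Sum>u\<in>neighbours V E v. mu u * g u)"
    using assms(1,3) by (intro sum_nonneg mult_nonneg_nonneg) auto
  ultimately show ?thesis
    using assms(2) by (simp add: dual_step_def)
qed

lemma dual_step_contraction:
  assumes "\<And>u. u \<in> V \<Longrightarrow> 0 \<le> mu u" and "(\<Sum>u\<in>neighbours V E v. mu u) \<le> q" and "0 \<le> M"
    and "\<And>u. u \<in> V \<Longrightarrow> \<bar>g u - h u\<bar> \<le> M"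
  shows "\<bar>dual_step V E mu g v - dual_step V E mu h v\<bar> \<le> q * M"
proof -
  have "\<bar>dual_step V E mu g v - dual_step V E mu h v\<bar> = \<bar>\<Sum>u\<in>neighbours V E v. mu u * (h u - g u)\<bar>"
    by (simp add: dual_step_def sum_subtractf right_diff_distrib)
  also have "\<dots> \<le> (\<Sum>u\<in>neighbours V E v. \<bar>mu u * (h u - g u)\<bar>)"
    by (rule sum_abs)
  also have "\<dots> \<le> (\<Sum>u\<in>neighbours V E v. mu u * M)"
    using assms(1,4)
    by (intro sum_mono) (auto simp: abs_mult abs_minus_commute intro!: mult_left_mono)
  also have "\<dots> \<le> q * M"
    using assms(2,3) by (simp add: sum_distrib_right[symmetric] mult_right_mono)
  finally show ?thesis .
qed

lemma dual_step_iterate_unit_interval: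
  assumes mu_nonneg: "\<And>v. v \<in> V \<Longrightarrow> 0 \<le> mu v"
    and mu_sum: "\<And>v. v \<in> V \<Longrightarrow> (\<Sum>u\<in>neighbours V E v. mu u) \<le> 1" and "v \<in> V"
  shows "0 \<le> (dual_step V E mu ^^ n) (\<lambda>_. 0) v \<and> (dual_step V E mu ^^ n) (\<lambda>_. 0) v \<le> 1"
  using \<open>v \<in> V\<close>
proof (induction n arbitrary: v)
  case 0
  then show ?case by simp
next
  case (Suc n)
  then show ?case
    unfolding funpow.simps comp_apply using mu_nonneg mu_sum[OF Suc.prems]
    by (intro dual_step_unit_interval) auto
qed

lemma dual_step_iterate_dist:
  assumes mu_nonneg: "\<And>v. v \<in> V \<Longrightarrow> 0 \<le> mu v"
    and mu_sum: "\<And>v. v \<in> V \<Longrightarrow> (\<Sum>u\<in>neighbours V E v. mu u) \<le> q" and "v \<in> V"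
  shows "\<bar>(dual_step V E mu ^^ Suc n) (\<lambda>_. 0) v - (dual_step V E mu ^^ n) (\<lambda>_. 0) v\<bar> \<le> q ^ n"
  using \<open>v \<in> V\<close>
proof (induction n arbitrary: v)
  case 0
  then show ?case by (simp add: dual_step_def)
next
  case (Suc n)
  define g where "g k = (dual_step V E mu ^^ k) (\<lambda>_. 0)" for k
  have "0 \<le> q ^ n"
    using abs_ge_zero Suc.IH[OF Suc.prems] by (rule order_trans)
  then have "\<bar>dual_step V E mu (g (Suc n)) v - dual_step V E mu (g n) v\<bar> \<le> q * q ^ n"
    using Suc.IH by (intro dual_step_contraction[OF mu_nonneg mu_sum[OF Suc.prems]]) (auto simp: g_def)
  then show ?case
    by (simp add: g_def)
qed

lemma dual_step_has_fixpoint: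
  assumes mu_nonneg: "\<And>v. v \<in> V \<Longrightarrow> 0 \<le> mu v"
    and mu_sum: "\<And>v. v \<in> V \<Longrightarrow> (\<Sum>u\<in>neighbours V E v. mu u) \<le> q" and "q < 1"
  shows "\<exists>\<gamma>. \<forall>v\<in>V. 0 \<le> \<gamma> v \<and> dual_step V E mu \<gamma> v = \<gamma> v"
proof -
  define g where "g n = (dual_step V E mu ^^ n) (\<lambda>_. 0)" for n
  have mu_sum_le_1: "(\<Sum>u\<in>neighbours V E v. mu u) \<le> 1" if "v \<in> V" for v
    using mu_sum[OF that] \<open>q < 1\<close> by linarith
  have g_convergent: "convergent (\<lambda>n. g n v)" if "v \<in> V" for v
  proof -
    have "0 \<le> (\<Sum>u\<in>neighbours V E v. mu u)"
      by (intro sum_nonneg mu_nonneg) simp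
    then have "0 \<le> q"
      using mu_sum[OF that] by linarith
    then have "summable (\<lambda>n. g (Suc n) v - g n v)"
      using dual_step_iterate_dist[OF mu_nonneg mu_sum that] \<open>q < 1\<close> unfolding g_def
      by (intro summable_comparison_test'[OF summable_geometric[of q]]) auto
    then have "convergent (\<lambda>n. g n v - g 0 v)"
      by (simp add: summable_iff_convergent sum_lessThan_telescope[of "\<lambda>n. g n v"])
    then show ?thesis
      by (simp add: g_def)
  qed
  define \<gamma> where "\<gamma> v = lim (\<lambda>n. g n v)" for v
  have g_lim: "(\<lambda>n. g n v) \<longlonglongrightarrow> \<gamma> v" if "v \<in> V" for v
    using g_convergent[OF that] by (simp add: \<gamma>_def convergent_LIMSEQ_iff)
  have "dual_step V E mu \<gamma> v = \<gamma> v" if "v \<in> V" for v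
  proof (rule LIMSEQ_unique)
    show "(\<lambda>n. g (Suc n) v) \<longlonglongrightarrow> \<gamma> v"
      using g_lim[OF that] by (rule LIMSEQ_Suc)
    show "(\<lambda>n. g (Suc n) v) \<longlonglongrightarrow> dual_step V E mu \<gamma> v"
    proof -
      have "(\<lambda>n. g (Suc n) v) = (\<lambda>n. 1 - (\<Sum>u\<in>neighbours V E v. mu u * g n u))"
        by (simp add: g_def dual_step_def)
      then show ?thesis
        unfolding dual_step_def by (simp only:) (intro tendsto_intros g_lim, simp)
    qed
  qed
  moreover have "0 \<le> \<gamma> v" if "v \<in> V" for v
    using g_lim[OF that] dual_step_iterate_unit_interval[OF mu_nonneg mu_sum_le_1 that]
    by (intro LIMSEQ_le_const) (auto simp: g_def)
  ultimately show ?thesis by blast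
qed

lemma fixpoint_square_identity:
  fixes m c b S d :: real
  assumes "S = 1 - c" and "d * m * b = 1 - b"
    and "T = S * (m * c) - S * (2 * (m * b)) + d * (m * b)\<^sup>2"
  shows "m * c - m * b = m * (c - b)\<^sup>2 + T"
proof -
  have "d * (m * b)\<^sup>2 = m * b * (1 - b)"
    by (simp add: power2_eq_square ac_simps flip: assms(2))
  then have "T = (1 - c) * (m * c) - (1 - c) * (2 * (m * b)) + m * b * (1 - b)"
    using assms(1,3) by simp
  then show ?thesis
    by (simp add: power2_eq_square algebra_simps)
qed

lemma dual_step_fixpoint_weight_ge:
  assumes "finite V" and "symp E"
    and mu_nonneg: "\<And>v. v \<in> V \<Longrightarrow> 0 \<le> mu v"
    and mu_sum: "\<And>v. v \<in> V \<Longrightarrow> (\<Sum>u\<in>neighbours V E v. mu u) \<le> 1"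
    and fixpoint: "\<And>v. v \<in> V \<Longrightarrow> dual_step V E mu \<gamma> v = \<gamma> v"
  shows "(\<Sum>v\<in>V. mu v / (1 + real (card (neighbours V E v)) * mu v)) \<le> (\<Sum>v\<in>V. mu v * \<gamma> v)"
proof -
  define \<beta> where "\<beta> v = 1 / (1 + real (card (neighbours V E v)) * mu v)" for v
  define z where "z v = \<gamma> v - \<beta> v" for v
  define g where "g u v = mu u * \<gamma> u * (mu v * \<gamma> v) - mu u * \<gamma> u * (2 * (mu v * \<beta> v))
    + (mu v * \<beta> v)\<^sup>2" for u v
  have split: "mu v * \<gamma> v - mu v * \<beta> v = mu v * (z v)\<^sup>2 + (\<Sum>u\<in>neighbours V E v. g u v)"
    if "v \<in> V" for v
  proof -
    define d where "d = real (card (neighbours V E v))"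
    define S where "S = (\<Sum>u\<in>neighbours V E v. mu u * \<gamma> u)"
    have S_eq: "S = 1 - \<gamma> v"
      using fixpoint[OF that] by (simp add: dual_step_def S_def)
    have "0 < 1 + d * mu v"
      using mu_nonneg[OF that] by (simp add: d_def add_pos_nonneg)
    then have d_eq: "d * mu v * \<beta> v = 1 - \<beta> v"
      by (simp add: \<beta>_def d_def field_simps)
    have "(\<Sum>u\<in>neighbours V E v. g u v)
        = S * (mu v * \<gamma> v) - S * (2 * (mu v * \<beta> v)) + d * (mu v * \<beta> v)\<^sup>2"
      by (simp add: g_def S_def d_def sum.distrib sum_subtractf sum_distrib_right)
    with S_eq d_eq show ?thesis
      unfolding z_def by (rule fixpoint_square_identity)
  qed
  have "(\<Sum>v\<in>V. \<Sum>u\<in>neighbours V E v. mu u * mu v * (z v)\<^sup>2) \<le> (\<Sum>v\<in>V. mu v * (z v)\<^sup>2)"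
  proof (intro sum_mono)
    fix v assume "v \<in> V"
    then have "(\<Sum>u\<in>neighbours V E v. mu u) * (mu v * (z v)\<^sup>2) \<le> mu v * (z v)\<^sup>2"
      using mu_nonneg mu_sum by (intro mult_left_le_one_le sum_nonneg) auto
    then show "(\<Sum>u\<in>neighbours V E v. mu u * mu v * (z v)\<^sup>2) \<le> mu v * (z v)\<^sup>2"
      by (simp add: sum_distrib_right mult.assoc)
  qed
  \<comment> \<open>After borrowing the terms mu u * mu v * (z v)^2 from the diagonal part, the edge sum
    symmetrises to a sum of squares.\<close>
  moreover have "0 \<le> (\<Sum>v\<in>V. \<Sum>u\<in>neighbours V E v. g u v + mu u * mu v * (z v)\<^sup>2)"
  proof (rule sum_neighbours_nonneg_symmetric[OF assms(1,2)])
    fix u v assume "u \<in> V" "v \<in> V"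
    have "g u v + mu u * mu v * (z v)\<^sup>2 + (g v u + mu v * mu u * (z u)\<^sup>2)
        = mu u * mu v * (z u + z v)\<^sup>2 + (mu u * \<beta> u - mu v * \<beta> v)\<^sup>2"
      by (simp add: g_def z_def power2_eq_square algebra_simps)
    also have "0 \<le> \<dots>"
      using mu_nonneg \<open>u \<in> V\<close> \<open>v \<in> V\<close> by simp
    finally show "0 \<le> g u v + mu u * mu v * (z v)\<^sup>2 + (g v u + mu v * mu u * (z u)\<^sup>2)" .
  qed
  ultimately have "0 \<le> (\<Sum>v\<in>V. mu v * \<gamma> v - mu v * \<beta> v)"
    by (simp add: split sum.distrib)
  then show ?thesis
    by (simp add: \<beta>_def sum_subtractf)
qed

lemma dual_step_fixpoint_weight_le_sum:
  assumes "finite V" and "symp E"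
    and \<gamma>_nonneg: "\<And>v. v \<in> V \<Longrightarrow> 0 \<le> \<gamma> v"
    and fixpoint: "\<And>v. v \<in> V \<Longrightarrow> dual_step V E mu \<gamma> v = \<gamma> v"
    and constraint: "\<And>v. v \<in> V \<Longrightarrow> mu v \<le> p v + mu v * (\<Sum>u\<in>neighbours V E v. p u)"
  shows "(\<Sum>v\<in>V. mu v * \<gamma> v) \<le> (\<Sum>v\<in>V. p v)"
proof -
  have "(\<Sum>v\<in>V. mu v * \<gamma> v) \<le> (\<Sum>v\<in>V. \<gamma> v * (p v + mu v * (\<Sum>u\<in>neighbours V E v. p u)))"
    using \<gamma>_nonneg constraint by (intro sum_mono) (simp add: mult.commute mult_left_mono)
  also have "\<dots> = (\<Sum>v\<in>V. \<gamma> v * p v) + (\<Sum>v\<in>V. \<Sum>u\<in>neighbours V E v. mu v * \<gamma> v * p u)"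
    by (simp add: sum.distrib sum_distrib_left algebra_simps)
  also have "(\<Sum>v\<in>V. \<Sum>u\<in>neighbours V E v. mu v * \<gamma> v * p u)
      = (\<Sum>u\<in>V. \<Sum>v\<in>neighbours V E u. mu v * \<gamma> v * p u)"
    by (rule sum_neighbours_swap[OF assms(1,2)])
  also have "(\<Sum>v\<in>V. \<gamma> v * p v) + \<dots> = (\<Sum>u\<in>V. p u * (\<gamma> u + (\<Sum>v\<in>neighbours V E u. mu v * \<gamma> v)))"
    by (simp add: sum.distrib sum_distrib_left sum_distrib_right algebra_simps)
  also have "\<dots> = (\<Sum>u\<in>V. p u)"
    using fixpoint by (simp add: dual_step_def algebra_simps)
  finally show ?thesis .
qed

lemma sum_ge_of_neighbourhood_constraints:
  assumes "finite V" and "symp E"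
    and mu_nonneg: "\<And>v. v \<in> V \<Longrightarrow> 0 \<le> mu v"
    and mu_sum: "\<And>v. v \<in> V \<Longrightarrow> (\<Sum>u\<in>neighbours V E v. mu u) \<le> q" and "q < 1"
    and constraint: "\<And>v. v \<in> V \<Longrightarrow> mu v \<le> p v + mu v * (\<Sum>u\<in>neighbours V E v. p u)"
  shows "(\<Sum>v\<in>V. mu v / (1 + real (card (neighbours V E v)) * mu v)) \<le> (\<Sum>v\<in>V. p v)"
proof -
  obtain \<gamma> where \<gamma>_nonneg: "\<And>v. v \<in> V \<Longrightarrow> 0 \<le> \<gamma> v"
    and fixpoint: "\<And>v. v \<in> V \<Longrightarrow> dual_step V E mu \<gamma> v = \<gamma> v"
    using dual_step_has_fixpoint[OF mu_nonneg mu_sum \<open>q < 1\<close>] by blast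
  have mu_sum_le_1: "(\<Sum>u\<in>neighbours V E v. mu u) \<le> 1" if "v \<in> V" for v
    using mu_sum[OF that] \<open>q < 1\<close> by linarith
  have "(\<Sum>v\<in>V. mu v / (1 + real (card (neighbours V E v)) * mu v)) \<le> (\<Sum>v\<in>V. mu v * \<gamma> v)"
    by (rule dual_step_fixpoint_weight_ge[OF assms(1,2) mu_nonneg mu_sum_le_1 fixpoint])
  also have "\<dots> \<le> (\<Sum>v\<in>V. p v)"
    by (rule dual_step_fixpoint_weight_le_sum[OF assms(1,2) \<gamma>_nonneg fixpoint constraint])
  finally show ?thesis .
qed

section \<open>Occupancy probabilities in the hard-core model\<close>

lemma sum_le_sum_cover:
  fixes f :: "'b \<Rightarrow> real"
  assumes "finite S" and "finite K" and "\<And>x. x \<in> S \<Longrightarrow> 0 \<le> f x"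
    and "\<And>x. x \<in> S \<Longrightarrow> \<exists>i\<in>K. P i x"
  shows "sum f S \<le> (\<Sum>i\<in>K. \<Sum>x\<in>{x \<in> S. P i x}. f x)"
proof -
  have "sum f S \<le> (\<Sum>x\<in>S. real (card {i \<in> K. P i x}) * f x)"
  proof (intro sum_mono)
    fix x assume "x \<in> S"
    then have "1 \<le> card {i \<in> K. P i x}"
      using assms(2,4) by (simp add: Suc_le_eq card_gt_0_iff) blast
    then show "f x \<le> real (card {i \<in> K. P i x}) * f x"
      using assms(3)[OF \<open>x \<in> S\<close>] by (simp add: mult_le_cancel_right1)
  qed
  also have "\<dots> = (\<Sum>x\<in>S. \<Sum>i\<in>{i \<in> K. P i x}. f x)"
    by simp
  also have "\<dots> = (\<Sum>i\<in>K. \<Sum>x\<in>{x \<in> S. P i x}. f x)"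
    by (rule sum.swap_restrict[OF assms(1,2)])
  finally show ?thesis .
qed

lemma independent_sets_subset: "I \<in> independent_sets V E \<Longrightarrow> I \<subseteq> V"
  by (simp add: independent_sets_def)

lemma finite_independent_sets: "finite V \<Longrightarrow> finite (independent_sets V E)"
  by (rule finite_subset[of _ "Pow V"]) (auto simp: independent_sets_def)

lemma weight_nonneg: "(\<And>v. v \<in> I \<Longrightarrow> 0 \<le> lam v) \<Longrightarrow> 0 \<le> weight lam I"
  by (simp add: weight_def prod_nonneg)

lemma partition_fn_ge_1:
  assumes "finite V" and "\<And>v. v \<in> V \<Longrightarrow> 0 \<le> lam v"
  shows "1 \<le> partition_fn V E lam"
proof -
  have "weight lam {} \<le> partition_fn V E lam"
    unfolding partition_fn_def using assms
    by (intro member_le_sum finite_independent_sets)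
       (auto simp: independent_sets_def intro!: weight_nonneg)
  then show ?thesis
    by (simp add: weight_def)
qed

lemma hardcore_prob_nonneg:
  assumes "\<And>v. v \<in> V \<Longrightarrow> 0 \<le> lam v" and "I \<in> independent_sets V E"
  shows "0 \<le> hardcore_prob V E lam I"
  unfolding hardcore_prob_def partition_fn_def using assms independent_sets_subset
  by (intro divide_nonneg_nonneg sum_nonneg weight_nonneg) blast+

lemma sum_hardcore_prob:
  assumes "finite V" and "\<And>v. v \<in> V \<Longrightarrow> 0 \<le> lam v"
  shows "(\<Sum>I\<in>independent_sets V E. hardcore_prob V E lam I) = 1"
proof -
  have "1 \<le> partition_fn V E lam"
    using assms by (rule partition_fn_ge_1)
  then show ?thesis
    by (simp add: hardcore_prob_def partition_fn_def flip: sum_divide_distrib)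
qed

definition occupancy :: "'a set \<Rightarrow> ('a \<Rightarrow> 'a \<Rightarrow> bool) \<Rightarrow> ('a \<Rightarrow> real) \<Rightarrow> 'a \<Rightarrow> real" where
  "occupancy V E lam v = (\<Sum>I\<in>{I \<in> independent_sets V E. v \<in> I}. hardcore_prob V E lam I)"

lemma expected_size_eq_sum_occupancy:
  assumes "finite V"
  shows "expected_size V E lam = (\<Sum>v\<in>V. occupancy V E lam v)"
proof -
  have "expected_size V E lam
      = (\<Sum>I\<in>independent_sets V E. \<Sum>v\<in>{v \<in> V. v \<in> I}. hardcore_prob V E lam I)"
    unfolding expected_size_def
    by (intro sum.cong refl) (auto dest: independent_sets_subset intro!: arg_cong[where f = card])
  also have "\<dots> = (\<Sum>v\<in>V. occupancy V E lam v)"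
    unfolding occupancy_def by (rule sum.swap_restrict[OF finite_independent_sets[OF assms] assms])
  finally show ?thesis .
qed

definition independent_sets_avoiding :: "'a set \<Rightarrow> ('a \<Rightarrow> 'a \<Rightarrow> bool) \<Rightarrow> 'a \<Rightarrow> 'a set set" where
  "independent_sets_avoiding V E u = {I \<in> independent_sets V E. u \<notin> I \<and> (\<forall>v\<in>I. \<not> E u v)}"

lemma occupancy_eq_fugacity_mult:
  assumes "simple_graph V E" and "u \<in> V"
  shows "occupancy V E lam u = lam u *
    (\<Sum>I\<in>independent_sets_avoiding V E u. hardcore_prob V E lam I)"
proof -
  have "finite V" and "symp E" and "\<not> E u u"
    using assms(1) by (auto simp: simple_graph_def intro: sympI)
  have "occupancy V E lam u = (\<Sum>J\<in>independent_sets_avoiding V E u.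
      hardcore_prob V E lam (insert u J))"
    unfolding occupancy_def
    by (rule sum.reindex_bij_witness[where i = "insert u" and j = "\<lambda>I. I - {u}"])
       (use \<open>u \<in> V\<close> \<open>symp E\<close> \<open>\<not> E u u\<close> in \<open>auto simp: independent_sets_avoiding_def independent_sets_def insert_absorb dest: sympD\<close>)
  also have "\<dots> = (\<Sum>J\<in>independent_sets_avoiding V E u.
      lam u * hardcore_prob V E lam J)"
  proof (intro sum.cong refl)
    fix J assume "J \<in> independent_sets_avoiding V E u"
    then have "finite J" and "u \<notin> J"
      using \<open>finite V\<close> by (auto simp: independent_sets_avoiding_def dest: independent_sets_subset
          intro: finite_subset)
    then show "hardcore_prob V E lam (insert u J) = lam u * hardcore_prob V E lam J"
      by (simp add: hardcore_prob_def weight_def)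
  qed
  finally show ?thesis
    by (simp add: sum_distrib_left)
qed

lemma occupancy_union_bound:
  assumes "simple_graph V E" and "\<And>v. v \<in> V \<Longrightarrow> 0 \<le> lam v" and "u \<in> V"
  shows "1 \<le> (\<Sum>I\<in>independent_sets_avoiding V E u. hardcore_prob V E lam I)
    + occupancy V E lam u + (\<Sum>v\<in>neighbours V E u. occupancy V E lam v)"
proof -
  define Ind where "Ind = independent_sets V E"
  define B where "B = independent_sets_avoiding V E u"
  have "finite V" and "\<not> E u u"
    using assms(1) by (auto simp: simple_graph_def)
  then have "finite Ind"
    by (simp add: Ind_def finite_independent_sets)
  have prob_nonneg: "I \<in> Ind \<Longrightarrow> 0 \<le> hardcore_prob V E lam I" for I
    unfolding Ind_def using assms(2) by (rule hardcore_prob_nonneg)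
  have "1 = (\<Sum>I\<in>Ind. hardcore_prob V E lam I)"
    unfolding Ind_def using \<open>finite V\<close> assms(2) by (simp add: sum_hardcore_prob)
  also have "\<dots> = (\<Sum>I\<in>Ind - B. hardcore_prob V E lam I) + (\<Sum>I\<in>B. hardcore_prob V E lam I)"
    using \<open>finite Ind\<close> by (intro sum.subset_diff) (auto simp: B_def Ind_def independent_sets_avoiding_def)
  also have "(\<Sum>I\<in>Ind - B. hardcore_prob V E lam I)
      \<le> (\<Sum>v\<in>insert u (neighbours V E u). \<Sum>I\<in>{I \<in> Ind - B. v \<in> I}. hardcore_prob V E lam I)"
    using \<open>finite V\<close> \<open>finite Ind\<close> prob_nonneg
    by (intro sum_le_sum_cover)
       (auto simp: B_def Ind_def independent_sets_avoiding_def finite_neighbours independent_sets_def)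
  also have "\<dots> \<le> (\<Sum>v\<in>insert u (neighbours V E u). occupancy V E lam v)"
    unfolding occupancy_def Ind_def[symmetric] using \<open>finite Ind\<close> prob_nonneg
    by (intro sum_mono sum_mono2) auto
  also have "\<dots> = occupancy V E lam u + (\<Sum>v\<in>neighbours V E u. occupancy V E lam v)"
    using \<open>finite V\<close> \<open>\<not> E u u\<close> by (simp add: finite_neighbours)
  finally show ?thesis
    by (simp add: B_def Ind_def)
qed

lemma occupancy_local_bound:
  assumes "simple_graph V E" and "\<And>v. v \<in> V \<Longrightarrow> 0 \<le> lam v" and "u \<in> V"
  shows "lam u \<le> (1 + lam u) * occupancy V E lam u + lam u * (\<Sum>v\<in>neighbours V E u. occupancy V E lam v)"
proof -
  have "lam u * 1 \<le> lam u * ((\<Sum>I\<in>independent_sets_avoiding V E u.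
      hardcore_prob V E lam I) + occupancy V E lam u + (\<Sum>v\<in>neighbours V E u. occupancy V E lam v))"
    using occupancy_union_bound[OF assms] assms(2,3) by (intro mult_left_mono) auto
  then show ?thesis
    using occupancy_eq_fugacity_mult[OF assms(1,3), of lam] by (simp add: algebra_simps)
qed

lemma occupancy_constraint:
  assumes "simple_graph V E" and "\<And>v. v \<in> V \<Longrightarrow> 0 \<le> lam v" and "u \<in> V"
  shows "lam u / (1 + lam u)
    \<le> occupancy V E lam u + lam u / (1 + lam u) * (\<Sum>v\<in>neighbours V E u. occupancy V E lam v)"
proof -
  have "0 < 1 + lam u"
    using assms(2,3) by (simp add: add_pos_nonneg)
  have "lam u \<le> (1 + lam u) * occupancy V E lam u + lam u * (\<Sum>v\<in>neighbours V E u. occupancy V E lam v)"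
    using assms by (rule occupancy_local_bound)
  also have "\<dots> = (occupancy V E lam u + lam u / (1 + lam u) * (\<Sum>v\<in>neighbours V E u. occupancy V E lam v))
      * (1 + lam u)"
    using \<open>0 < 1 + lam u\<close> by (simp add: field_simps)
  finally show ?thesis
    using \<open>0 < 1 + lam u\<close> by (simp add: pos_divide_le_eq)
qed

lemma degree_le_max_degree: "finite V \<Longrightarrow> v \<in> V \<Longrightarrow> degree V E v \<le> max_degree V E"
  by (auto simp: max_degree_def)

lemma sum_neighbours_fugacity_ratio_le:
  assumes "finite V" and "\<And>v. v \<in> V \<Longrightarrow> 0 \<le> lam v"
    and "\<And>v. v \<in> V \<Longrightarrow> lam v * real (max_degree V E) < 1" and "v \<in> V"
  shows "(\<Sum>u\<in>neighbours V E v. lam u / (1 + lam u))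
    \<le> real (max_degree V E) / (real (max_degree V E) + 1)"
proof -
  define D where "D = real (max_degree V E)"
  have "lam u / (1 + lam u) \<le> 1 / (D + 1)" if "u \<in> V" for u
    using assms(2,3)[OF that] by (simp add: D_def field_simps add_pos_nonneg)
  then have "(\<Sum>u\<in>neighbours V E v. lam u / (1 + lam u)) \<le> real (card (neighbours V E v)) * (1 / (D + 1))"
    by (intro sum_bounded_above) simp
  also have "\<dots> \<le> D * (1 / (D + 1))"
    using degree_le_max_degree[OF assms(1,4), of E]
    by (intro mult_right_mono) (simp_all add: D_def degree_eq_card_neighbours)
  finally show ?thesis
    by (simp add: D_def)
qed

lemma divide_one_plus_ratio:
  fixes x d :: real
  assumes "0 \<le> x" and "0 \<le> d"
  shows "x / (1 + x) / (1 + d * (x / (1 + x))) = x / (1 + (d + 1) * x)"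
proof -
  have "1 + x \<noteq> 0" and "1 + (d + 1) * x \<noteq> 0"
    using assms by (auto simp: add_nonneg_eq_0_iff)
  then have "1 + d * (x / (1 + x)) = (1 + (d + 1) * x) / (1 + x)"
    by (simp add: field_simps)
  with \<open>1 + x \<noteq> 0\<close> show ?thesis
    by simp
qed

theorem theorem1p1:
  fixes V :: "'a set" and E :: "'a \<Rightarrow> 'a \<Rightarrow> bool" and lam :: "'a \<Rightarrow> real"
  assumes "simple_graph V E"
    and "\<And>u. u \<in> V \<Longrightarrow> lam u \<ge> 0"
    and "\<And>u. u \<in> V \<Longrightarrow> lam u * real (max_degree V E) < 1"
  shows "expected_size V E lam \<ge>
           (\<Sum>u\<in>V. lam u / (1 + (real (degree V E u) + 1) * lam u))"
proof -
  have "finite V" and "symp E"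
    using assms(1) by (auto simp: simple_graph_def intro: sympI)
  define mu where "mu v = lam v / (1 + lam v)" for v
  have "(\<Sum>v\<in>V. mu v / (1 + real (card (neighbours V E v)) * mu v)) \<le> (\<Sum>v\<in>V. occupancy V E lam v)"
    unfolding mu_def
    using \<open>finite V\<close> \<open>symp E\<close> occupancy_constraint[OF assms(1,2)]
      sum_neighbours_fugacity_ratio_le[OF \<open>finite V\<close> assms(2,3)] assms(2)
    by (intro sum_ge_of_neighbourhood_constraints[where q = "real (max_degree V E) / (real (max_degree V E) + 1)"])
       auto
  moreover have "mu v / (1 + real (card (neighbours V E v)) * mu v)
      = lam v / (1 + (real (degree V E v) + 1) * lam v)" if "v \<in> V" for v
    using assms(2)[OF that] unfolding mu_def degree_eq_card_neighbours
    by (rule divide_one_plus_ratio) simp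
  ultimately show ?thesis
    using \<open>finite V\<close> by (simp add: expected_size_eq_sum_occupancy)
qed

end
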